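(* Consider a 3-S 3-D MUN-D (as in the context) in which the min-cut between $S_i$ and $T_j$ is at least $1$ for all $i,j\in\{1,2,3\}$. Let $n=2n'+1$, let $\alpha\in\mathbb{F}_{p^m}$ have multiplicative order $n$, regard the LECs $\underline{\varepsilon}$ as indeterminates, and for $i,j\in\{1,2,3\}$ let $\hat M_{ij}=\mathrm{diag}\big(M_{ij}(\alpha^0),M_{ij}(\alpha^1),\dots,M_{ij}(\alpha^{n-1})\big)$. Then $\det \hat M_{ij}$ is a nonzero polynomial in $\underline{\varepsilon}$ for all $i,j\in\{1,2,3\}$.
   Context: A three-source three-destination multiple unicast network with delays (3-S 3-D MUN-D) is a finite directed acyclic graph whose links each carry one symbol of $\mathbb{F}_{p^m}$ per time unit with unit delay, with sources $S_1,S_2,S_3$ each generating one process and destinations $T_1,T_2,T_3$ each with one output, $T_i$ demanding the process of $S_i$; the min-cut between $S_i$ and $T_i$ is $1$. Linear network coding with time-invariant local encoding coefficients (LECs) $\underline{\varepsilon}$ is used: a link's symbol at time $t+1$ is an LEC-weighted sum of the source symbol (if its tail is a source) and of the symbols on incoming links of its tail at time $t$, and $T_j$'s output at time $t+1$ is an LEC-weighted sum of its incoming link symbols at time $t$. The resulting transfer function from $S_i$ to $T_j$ is $D^{d'_{min}}M_{ij}(D)$ with $M_{ij}(D)=\sum_{d=0}^{d_{max}}M_{ij}^{(d)}D^d$, where $d'_{min}$ is the minimum path delay over all source-destination pairs and the coefficients $M_{ij}^{(d)}$ are polynomials in $\underline{\varepsilon}$. *)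

theory Defs
  imports "HOL-Library.Poly_Mapping" "HOL-Computational_Algebra.Polynomial"
    "Jordan_Normal_Form.Determinant"
begin

text \<open>Network: finite set of links E, each link e with tail node (tail e) and head node (head e).
  Multiple links between two nodes are allowed (links are abstract objects of type 'e).\<close>

definition acyclic_net :: "'e set \<Rightarrow> ('e \<Rightarrow> 'v) \<Rightarrow> ('e \<Rightarrow> 'v) \<Rightarrow> bool" where
  "acyclic_net E tail head \<longleftrightarrow> acyclic {(tail e, head e) | e. e \<in> E}"

definition is_path :: "'e set \<Rightarrow> ('e \<Rightarrow> 'v) \<Rightarrow> ('e \<Rightarrow> 'v) \<Rightarrow> 'v \<Rightarrow> 'v \<Rightarrow> 'e list \<Rightarrow> bool" where
  "is_path E tail head s t es \<longleftrightarrow>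
     es \<noteq> [] \<and> set es \<subseteq> E \<and> tail (hd es) = s \<and> head (last es) = t \<and>
     (\<forall>k. Suc k < length es \<longrightarrow> head (es ! k) = tail (es ! Suc k))"

definition paths :: "'e set \<Rightarrow> ('e \<Rightarrow> 'v) \<Rightarrow> ('e \<Rightarrow> 'v) \<Rightarrow> 'v \<Rightarrow> 'v \<Rightarrow> 'e list set" where
  "paths E tail head s t = {es. is_path E tail head s t es}"

definition mincut :: "'e set \<Rightarrow> ('e \<Rightarrow> 'v) \<Rightarrow> ('e \<Rightarrow> 'v) \<Rightarrow> 'v \<Rightarrow> 'v \<Rightarrow> nat" where
  "mincut E tail head s t =
     (LEAST k. \<exists>C. C \<subseteq> E \<and> card C = k \<and> paths (E - C) tail head s t = {})"

text \<open>Local encoding coefficients (indeterminates):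
  SrcL e   : coefficient of the source symbol on link e (tail e a source),
  LinkL e' e : coefficient of the symbol of incoming link e' on link e (head e' = tail e),
  DstL e   : coefficient of incoming link e at the destination head e.\<close>
datatype 'e lec = SrcL 'e | LinkL 'e 'e | DstL 'e

type_synonym ('e, 'a) lpoly = "('e lec \<Rightarrow>\<^sub>0 nat) \<Rightarrow>\<^sub>0 'a"

definition Var :: "'e lec \<Rightarrow> ('e, 'a::{zero,one}) lpoly" where
  "Var v = Poly_Mapping.single (Poly_Mapping.single v 1) 1"

definition Const :: "'a::zero \<Rightarrow> ('e, 'a) lpoly" where
  "Const c = Poly_Mapping.single 0 c"

definition path_gain :: "'e list \<Rightarrow> ('e, 'a::comm_ring_1) lpoly" where
  "path_gain es = Var (SrcL (hd es)) *
      (\<Prod>k<length es - 1. Var (LinkL (es ! k) (es ! Suc k))) * Var (DstL (last es))"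

text \<open>Delay of a path: one time unit per link plus one at the destination.\<close>
definition path_delay :: "'e list \<Rightarrow> nat" where
  "path_delay es = length es + 1"

definition dmin' :: "'e set \<Rightarrow> ('e \<Rightarrow> 'v) \<Rightarrow> ('e \<Rightarrow> 'v) \<Rightarrow> (nat \<Rightarrow> 'v) \<Rightarrow> (nat \<Rightarrow> 'v) \<Rightarrow> nat" where
  "dmin' E tail head S T =
     Min {path_delay es | es i j. i \<in> {1,2,3} \<and> j \<in> {1,2,3} \<and> es \<in> paths E tail head (S i) (T j)}"

text \<open>M_ij(D) as a polynomial in D with coefficients in the LEC polynomial ring;
  the transfer function from S_i to T_j is D^{d'_min} M_ij(D).\<close>
definition M :: "'e set \<Rightarrow> ('e \<Rightarrow> 'v) \<Rightarrow> ('e \<Rightarrow> 'v) \<Rightarrow> (nat \<Rightarrow> 'v) \<Rightarrow> (nat \<Rightarrow> 'v) \<Rightarrow> nat \<Rightarrow> nat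
     \<Rightarrow> ('e, 'a::comm_ring_1) lpoly poly" where
  "M E tail head S T i j =
     (\<Sum>es\<in>paths E tail head (S i) (T j).
        monom (path_gain es) (path_delay es - dmin' E tail head S T))"

definition mult_order_is :: "'a::field \<Rightarrow> nat \<Rightarrow> bool" where
  "mult_order_is a n \<longleftrightarrow> 0 < n \<and> a ^ n = 1 \<and> (\<forall>k. 0 < k \<and> k < n \<longrightarrow> a ^ k \<noteq> 1)"

definition Mhat :: "'e set \<Rightarrow> ('e \<Rightarrow> 'v) \<Rightarrow> ('e \<Rightarrow> 'v) \<Rightarrow> (nat \<Rightarrow> 'v) \<Rightarrow> (nat \<Rightarrow> 'v) \<Rightarrow> 'a::field
     \<Rightarrow> nat \<Rightarrow> nat \<Rightarrow> nat \<Rightarrow> ('e, 'a) lpoly mat" where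
  "Mhat E tail head S T \<alpha> n i j =
     mat n n (\<lambda>(r, c). if r = c then poly (M E tail head S T i j) (Const (\<alpha> ^ r)) else 0)"

end

theory Submission
  imports Defs
begin

text \<open>Specialise the LECs by setting those on one fixed path from \<open>S i\<close> to \<open>T j\<close> to \<open>1\<close>
  and all others to \<open>0\<close>; this is a ring homomorphism onto the field of scalars. Since the
  network is acyclic, paths are simple, and a simple path is the only path all of whose LECs
  occur on it. Hence \<open>M_ij(D)\<close> specialises to a single power \<open>D^k\<close>, and the determinant
  \<open>\<Prod>r<n. M_ij(\<alpha>^r)\<close> of the diagonal matrix to \<open>\<Prod>r<n. \<alpha>^(r k) \<noteq> 0\<close>.\<close>

definition monom_indicator :: "'b set \<Rightarrow> ('b \<Rightarrow>\<^sub>0 nat) \<Rightarrow> 'a::comm_semiring_1" where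
  "monom_indicator V m = (if Poly_Mapping.keys m \<subseteq> V then 1 else 0)"

definition eval_indicator :: "'b set \<Rightarrow> (('b \<Rightarrow>\<^sub>0 nat) \<Rightarrow>\<^sub>0 'a) \<Rightarrow> 'a::comm_semiring_1" where
  "eval_indicator V p =
     (\<Sum>m\<in>Poly_Mapping.keys p. Poly_Mapping.lookup p m * monom_indicator V m)"

lemma eval_indicator_eq_sum_superset:
  assumes "finite K" "Poly_Mapping.keys p \<subseteq> K"
  shows "eval_indicator V p = (\<Sum>m\<in>K. Poly_Mapping.lookup p m * monom_indicator V m)"
  unfolding eval_indicator_def
  by (rule sum.mono_neutral_left) (use assms in \<open>auto simp: in_keys_iff\<close>)

lemma eval_indicator_zero [simp]: "eval_indicator V 0 = 0"
  by (simp add: eval_indicator_def)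

lemma eval_indicator_single [simp]:
  "eval_indicator V (Poly_Mapping.single m c) = c * monom_indicator V m"
  by (simp add: eval_indicator_def)

lemma eval_indicator_add: "eval_indicator V (p + q) = eval_indicator V p + eval_indicator V q"
proof -
  let ?K = "Poly_Mapping.keys p \<union> Poly_Mapping.keys q"
  have "eval_indicator V (p + q) = (\<Sum>m\<in>?K. Poly_Mapping.lookup (p + q) m * monom_indicator V m)"
    by (rule eval_indicator_eq_sum_superset) (auto simp: keys_add)
  also have "\<dots> = (\<Sum>m\<in>?K. Poly_Mapping.lookup p m * monom_indicator V m) +
      (\<Sum>m\<in>?K. Poly_Mapping.lookup q m * monom_indicator V m)"
    by (simp add: lookup_add distrib_right sum.distrib)
  also have "\<dots> = eval_indicator V p + eval_indicator V q"
    by (simp add: eval_indicator_eq_sum_superset[symmetric])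
  finally show ?thesis .
qed

lemma eval_indicator_sum: "eval_indicator V (sum f A) = (\<Sum>a\<in>A. eval_indicator V (f a))"
  by (induction A rule: infinite_finite_induct) (auto simp: eval_indicator_add)

lemma monom_indicator_add:
  "monom_indicator V (m + m') = monom_indicator V m * monom_indicator V m'"
proof -
  have "Poly_Mapping.keys (m + m') = Poly_Mapping.keys m \<union> Poly_Mapping.keys m'"
    by (auto simp: in_keys_iff lookup_add)
  then show ?thesis by (simp add: monom_indicator_def)
qed

lemma poly_mapping_sum_singles:
  "p = (\<Sum>m\<in>Poly_Mapping.keys p. Poly_Mapping.single m (Poly_Mapping.lookup p m))"
  by (rule poly_mapping_eqI) (simp add: lookup_sum lookup_single when_def in_keys_iff)

lemma eval_indicator_mult: "eval_indicator V (p * q) = eval_indicator V p * eval_indicator V q"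
proof -
  let ?e = "\<lambda>m. Poly_Mapping.single m (Poly_Mapping.lookup p m)"
  let ?f = "\<lambda>m'. Poly_Mapping.single m' (Poly_Mapping.lookup q m')"
  have "eval_indicator V (p * q) =
      eval_indicator V ((\<Sum>m\<in>Poly_Mapping.keys p. ?e m) * (\<Sum>m'\<in>Poly_Mapping.keys q. ?f m'))"
    by (simp flip: poly_mapping_sum_singles)
  also have "\<dots> = (\<Sum>m\<in>Poly_Mapping.keys p. \<Sum>m'\<in>Poly_Mapping.keys q.
       Poly_Mapping.lookup p m * Poly_Mapping.lookup q m' *
       (monom_indicator V m * monom_indicator V m'))"
    by (simp add: sum_distrib_left sum_distrib_right eval_indicator_sum mult_single
        monom_indicator_add) (rule sum.swap)
  also have "\<dots> = eval_indicator V p * eval_indicator V q"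
    by (simp add: eval_indicator_def sum_product mult_ac)
  finally show ?thesis .
qed

lemma eval_indicator_one [simp]: "eval_indicator V 1 = 1"
  by (simp flip: single_one add: monom_indicator_def)

lemma eval_indicator_prod: "eval_indicator V (prod f A) = (\<Prod>a\<in>A. eval_indicator V (f a))"
  by (induction A rule: infinite_finite_induct) (auto simp: eval_indicator_mult)

lemma eval_indicator_power: "eval_indicator V (p ^ k) = eval_indicator V p ^ k"
  by (induction k) (auto simp: eval_indicator_mult)

lemma eval_indicator_Var: "eval_indicator V (Var v) = (if v \<in> V then 1 else 0)"
  by (simp add: Var_def monom_indicator_def)

lemma eval_indicator_Const: "eval_indicator V (Const c) = c"
  by (simp add: Const_def monom_indicator_def)

lemma is_path_tails_trancl:
  assumes "is_path E tail head s t es" "a < b" "b < length es"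
  shows "(tail (es ! a), tail (es ! b)) \<in> {(tail e, head e) | e. e \<in> E}\<^sup>+"
  using assms(2,3)
proof (induction b)
  case 0
  then show ?case by simp
next
  case (Suc c)
  have "es ! c \<in> E" "head (es ! c) = tail (es ! Suc c)"
    using assms(1) Suc.prems unfolding is_path_def by auto
  then have step: "(tail (es ! c), tail (es ! Suc c)) \<in> {(tail e, head e) | e. e \<in> E}"
    by force
  show ?case
  proof (cases "a = c")
    case True
    then show ?thesis using step by auto
  next
    case False
    then have "(tail (es ! a), tail (es ! c)) \<in> {(tail e, head e) | e. e \<in> E}\<^sup>+"
      using Suc by simp
    then show ?thesis using step by (rule trancl.trancl_into_trancl)
  qed
qed

lemma is_path_distinct:
  assumes "acyclic_net E tail head" "is_path E tail head s t es"
  shows "distinct es"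
proof (rule ccontr)
  assume "\<not> distinct es"
  then obtain a b where ab: "a < b" "b < length es" "es ! a = es ! b"
    by (metis distinct_conv_nth linorder_neqE_nat)
  then have "(tail (es ! a), tail (es ! a)) \<in> {(tail e, head e) | e. e \<in> E}\<^sup>+"
    using is_path_tails_trancl[OF assms(2) ab(1,2)] by simp
  then show False using assms(1) unfolding acyclic_net_def acyclic_def by blast
qed

lemma finite_paths:
  assumes "finite E" "acyclic_net E tail head"
  shows "finite (paths E tail head s t)"
proof (rule finite_subset[OF _ finite_lists_length_le[OF assms(1)]])
  show "paths E tail head s t \<subseteq> {xs. set xs \<subseteq> E \<and> length xs \<le> card E}"
  proof
    fix es assume "es \<in> paths E tail head s t"
    then have p: "is_path E tail head s t es" by (simp add: paths_def)
    then have "distinct es" "set es \<subseteq> E"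
      using is_path_distinct[OF assms(2)] by (auto simp: is_path_def)
    then show "es \<in> {xs. set xs \<subseteq> E \<and> length xs \<le> card E}"
      using assms(1) by (metis card_mono distinct_card mem_Collect_eq)
  qed
qed

lemma paths_nonempty_if_mincut_pos:
  assumes "mincut E tail head s t \<ge> 1"
  shows "paths E tail head s t \<noteq> {}"
proof
  assume "paths E tail head s t = {}"
  then have "mincut E tail head s t \<le> 0"
    unfolding mincut_def by (intro Least_le exI[of _ "{}"]) simp
  then show False using assms by simp
qed

definition path_lecs :: "'e list \<Rightarrow> 'e lec set" where
  "path_lecs es = insert (SrcL (hd es)) (insert (DstL (last es))
      {LinkL (es ! k) (es ! Suc k) | k. Suc k < length es})"

lemma prod_indicator:
  "finite A \<Longrightarrow> (\<Prod>k\<in>A. if P k then 1 else 0 :: 'a::comm_semiring_1) =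
     (if \<forall>k\<in>A. P k then 1 else 0)"
  by (induction A rule: finite_induct) auto

lemma eval_indicator_path_gain:
  "eval_indicator V (path_gain es :: ('e, 'a::comm_ring_1) lpoly) =
     (if path_lecs es \<subseteq> V then 1 else 0)"
proof -
  have links: "(\<forall>k\<in>{..<length es - 1}. LinkL (es ! k) (es ! Suc k) \<in> V) \<longleftrightarrow>
      {LinkL (es ! k) (es ! Suc k) | k. Suc k < length es} \<subseteq> V"
    by (auto simp: less_diff_conv; blast)
  have "eval_indicator V (path_gain es :: ('e, 'a) lpoly) =
     (if SrcL (hd es) \<in> V then 1 else 0) *
     (if \<forall>k\<in>{..<length es - 1}. LinkL (es ! k) (es ! Suc k) \<in> V then 1 else 0) *
     (if DstL (last es) \<in> V then 1 else 0)"
    by (simp add: path_gain_def eval_indicator_mult eval_indicator_prod eval_indicator_Var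
        prod_indicator del: prod.lessThan_Suc)
  then show ?thesis
    unfolding links path_lecs_def by simp
qed

text \<open>A path is determined by its first link and its consecutive link pairs, so on a
  simple path \<open>es0\<close> these pairs force any other path with the same start to follow
  \<open>es0\<close> link by link; the last link pins down the length.\<close>

lemma path_lecs_subset_imp_eq:
  assumes ne: "es \<noteq> []" "es0 \<noteq> []" and d: "distinct es0"
    and sub: "path_lecs es \<subseteq> path_lecs es0"
  shows "es = es0"
proof -
  have link: "\<exists>k'. Suc k' < length es0 \<and> es ! k = es0 ! k' \<and> es ! Suc k = es0 ! Suc k'"
    if "Suc k < length es" for k
  proof -
    have "LinkL (es ! k) (es ! Suc k) \<in> path_lecs es0"
      using sub that unfolding path_lecs_def by blast
    then show ?thesis unfolding path_lecs_def by auto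
  qed
  have h: "hd es = hd es0" and l: "last es = last es0"
    using sub unfolding path_lecs_def by auto
  have eq: "k < length es \<longrightarrow> k < length es0 \<longrightarrow> es ! k = es0 ! k" for k
  proof (induction k)
    case 0
    then show ?case using h ne by (simp add: hd_conv_nth)
  next
    case (Suc k)
    show ?case
    proof (intro impI)
      assume a: "Suc k < length es" "Suc k < length es0"
      obtain k' where k': "Suc k' < length es0" "es ! k = es0 ! k'" "es ! Suc k = es0 ! Suc k'"
        using link[OF a(1)] by blast
      have "es0 ! k' = es0 ! k" using Suc a k' by simp
      then have "k' = k" using d k' a by (simp add: nth_eq_iff_index_eq)
      then show "es ! Suc k = es0 ! Suc k" using k' by simp
    qed
  qed
  have len: "length es = length es0"
  proof (rule ccontr)
    assume "length es \<noteq> length es0"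
    then consider "length es < length es0" | "length es0 < length es" by linarith
    then show False
    proof cases
      case 1
      have "es0 ! (length es - 1) = last es" using eq 1 ne by (simp add: last_conv_nth)
      also have "\<dots> = es0 ! (length es0 - 1)" using l ne by (simp add: last_conv_nth)
      finally have "length es - 1 = length es0 - 1"
        using d 1 ne by (simp add: nth_eq_iff_index_eq)
      then show False using 1 ne by (cases es) auto
    next
      case 2
      obtain k' where k': "Suc k' < length es0" "es ! (length es0 - 1) = es0 ! k'"
        using link[of "length es0 - 1"] 2 ne by auto
      have "es ! (length es0 - 1) = es0 ! (length es0 - 1)" using eq 2 ne by simp
      then have "k' = length es0 - 1" using k' d ne by (simp add: nth_eq_iff_index_eq)
      then show False using k' by simp
    qed
  qed
  show ?thesis using eq len by (simp add: nth_equalityI)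
qed

lemma eval_indicator_poly_M_Const:
  fixes c :: "'a::comm_ring_1"
  assumes "finite E" "acyclic_net E tail head"
    and es0: "es0 \<in> paths E tail head (S i) (T j)"
  shows "eval_indicator (path_lecs es0) (poly (M E tail head S T i j) (Const c)) =
    c ^ (path_delay es0 - dmin' E tail head S T)"
proof -
  let ?P = "paths E tail head (S i) (T j)"
  let ?k = "\<lambda>es. path_delay es - dmin' E tail head S T"
  have p0: "is_path E tail head (S i) (T j) es0" using es0 by (simp add: paths_def)
  have only_es0: "path_lecs es \<subseteq> path_lecs es0 \<longleftrightarrow> es = es0" if "es \<in> ?P" for es
    using that path_lecs_subset_imp_eq[of es es0] p0 is_path_distinct[OF assms(2) p0]
    by (auto simp: paths_def is_path_def)
  have "eval_indicator (path_lecs es0) (poly (M E tail head S T i j) (Const c)) =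
      (\<Sum>es\<in>?P. (if path_lecs es \<subseteq> path_lecs es0 then 1 else 0) * c ^ ?k es)"
    by (simp add: M_def poly_sum poly_monom eval_indicator_sum eval_indicator_mult
        eval_indicator_power eval_indicator_Const eval_indicator_path_gain)
  also have "\<dots> = (\<Sum>es\<in>?P. if es = es0 then c ^ ?k es else 0)"
    by (rule sum.cong) (simp_all add: only_es0)
  also have "\<dots> = c ^ ?k es0"
    using finite_paths[OF assms(1,2)] es0 by (simp add: sum.delta')
  finally show ?thesis .
qed

lemma det_Mhat:
  "det (Mhat E tail head S T \<alpha> n i j) = (\<Prod>r = 0..<n. poly (M E tail head S T i j) (Const (\<alpha> ^ r)))"
proof -
  have "Mhat E tail head S T \<alpha> n i j \<in> carrier_mat n n"
    "upper_triangular (Mhat E tail head S T \<alpha> n i j)"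
    by (simp_all add: Mhat_def upper_triangular_def)
  then show ?thesis
    by (simp add: det_upper_triangular prod_list_diag_prod) (simp add: Mhat_def)
qed

lemma det_Mhat_nonzero:
  fixes \<alpha> :: "'a::field"
  assumes "finite E" "acyclic_net E tail head"
    and "mincut E tail head (S i) (T j) \<ge> 1" and "\<alpha> \<noteq> 0"
  shows "det (Mhat E tail head S T \<alpha> n i j) \<noteq> 0"
proof
  obtain es0 where es0: "es0 \<in> paths E tail head (S i) (T j)"
    using paths_nonempty_if_mincut_pos[OF assms(3)] by blast
  assume "det (Mhat E tail head S T \<alpha> n i j) = 0"
  then have "eval_indicator (path_lecs es0) (det (Mhat E tail head S T \<alpha> n i j)) = 0"
    by simp
  then show False
    using \<open>\<alpha> \<noteq> 0\<close>
    by (simp add: det_Mhat eval_indicator_prod eval_indicator_poly_M_Const[where S = S and T = T, OF assms(1,2) es0])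
qed

theorem lemma3:
  fixes E :: "'e set" and tail head :: "'e \<Rightarrow> 'v"
    and S T :: "nat \<Rightarrow> 'v"
    and \<alpha> :: "'a::{field, finite}" and n' n :: nat
  assumes "finite E"
    and "acyclic_net E tail head"
    and "inj_on S {1,2,3}" and "inj_on T {1,2,3}"
    and "S ` {1,2,3} \<inter> T ` {1,2,3} = {}"
    and "\<forall>i\<in>{1,2,3}. mincut E tail head (S i) (T i) = 1"
    and "\<forall>i\<in>{1,2,3}. \<forall>j\<in>{1,2,3}. mincut E tail head (S i) (T j) \<ge> 1"
    and "n = 2 * n' + 1"
    and "mult_order_is \<alpha> n"
  shows "\<forall>i\<in>{1,2,3}. \<forall>j\<in>{1,2,3}. det (Mhat E tail head S T \<alpha> n i j) \<noteq> 0"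
proof -
  have "\<alpha> \<noteq> 0"
    using assms(9) unfolding mult_order_is_def by (metis power_0_left zero_neq_one)
  then show ?thesis
    using det_Mhat_nonzero[where S = S and T = T and n = n, OF assms(1,2)] assms(7) by blast
qed

end
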